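(* For every integer $k\ge 0$, as $n\to\infty$, \[ \left\langle\left(S_{2,n}-\frac{n}{4}\right)^k\right\rangle\sim\frac{k!}{2^{\lfloor (k+1)/2\rfloor}\,\lfloor k/2\rfloor!\,4^k}\,n^{\lfloor k/2\rfloor}. \] Equivalently, for every integer $s\ge 0$, \[ \left\langle\left(S_{2,n}-\frac{n}{4}\right)^{2s}\right\rangle\sim\frac{(2s-1)!!}{4^{2s}}n^s,\qquad \left\langle\left(S_{2,n}-\frac{n}{4}\right)^{2s+1}\right\rangle\sim\frac{(2s+1)!!}{2\cdot 4^{2s+1}}n^s. \]
   Context: For $n\ge 1$, let $\Omega_n$ be the set of rooted plane (ordered) full binary trees with $n$ leaves (every internal node has exactly two children, left and right distinguished). The random model is $\Omega_n$ with the uniform probability measure $P_n$; $\langle\cdot\rangle$ denotes expectation with respect to $P_n$. Horton–Strahler ordering: every leaf has order 1; an internal node whose two children have different orders $r_1\neq r_2$ has order $\max\{r_1,r_2\}$; an internal node whose two children both have order $r$ has order $r+1$. A branch of order $r$ is a maximal connected path consisting of nodes all of order $r$. $S_{2,n}(\tau)$ is the number of branches of order $2$ in $\tau\in\Omega_n$. For sequences, $a_n\sim b_n$ means $\lim_{n\to\infty}a_n/b_n=1$. Convention: $(-1)!!=1$. *)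

theory Defs
  imports Complex_Main "HOL-Library.Landau_Symbols"
begin

datatype btree = Leaf | Node btree btree

fun leaves :: "btree \<Rightarrow> nat" where
  "leaves Leaf = 1"
| "leaves (Node l r) = leaves l + leaves r"

definition Omega :: "nat \<Rightarrow> btree set" where
  "Omega n = {t. leaves t = n}"

fun hs_order :: "btree \<Rightarrow> nat" where
  "hs_order Leaf = 1"
| "hs_order (Node l r) =
     (if hs_order l = hs_order r then hs_order l + 1
      else max (hs_order l) (hs_order r))"

text \<open>branches_aux q p t counts the branches of order q inside subtree t,
where p is the order of the parent of the root of t (0 if t is the whole tree,
i.e. its root has no parent). Nodes of order q form vertex-disjoint paths;
each maximal one (a branch) is counted once, at its top node, i.e. the node
of order q whose parent does not have order q (or which is the root).\<close>
fun branches_aux :: "nat \<Rightarrow> nat \<Rightarrow> btree \<Rightarrow> nat" where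
  "branches_aux q p Leaf = (if hs_order Leaf = q \<and> p \<noteq> q then 1 else 0)"
| "branches_aux q p (Node l r) =
     (if hs_order (Node l r) = q \<and> p \<noteq> q then 1 else 0)
     + branches_aux q (hs_order (Node l r)) l
     + branches_aux q (hs_order (Node l r)) r"

definition branches :: "nat \<Rightarrow> btree \<Rightarrow> nat" where
  "branches q t = branches_aux q 0 t"

abbreviation S2 :: "btree \<Rightarrow> nat" where
  "S2 t \<equiv> branches 2 t"

definition expect :: "nat \<Rightarrow> (btree \<Rightarrow> real) \<Rightarrow> real" where
  "expect n f = (\<Sum>t\<in>Omega n. f t) / real (card (Omega n))"

end

theory Submission
  imports Defs "HOL-Computational_Algebra.Formal_Power_Series" "HOL-Real_Asymp.Real_Asymp"
begin

text \<open>
  Let \<open>P\<^sub>n(y) = \<Sum>\<^sub>t y^S\<^sub>2(t)\<close> over trees with \<open>n\<close> leaves. Splitting a tree at its root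
  (a node with two leaf children is one order-2 branch, otherwise the branches of the two
  subtrees add up) shows that \<open>G = \<Sum> P\<^sub>n x\<^sup>n\<close> solves \<open>G = G\<^sup>2 + x + (y - 1) x\<^sup>2\<close>, so
  \<open>G = (1 - \<surd>((1 - \<alpha> x)(1 - \<beta> x)))/2\<close> with \<open>\<alpha> + \<beta> = 4\<close>, \<open>\<alpha>\<beta> = 4(1 - y)\<close>, and \<open>P\<^sub>n\<close> is a
  convolution of the coefficients \<open>(1/2 choose j)\<close>.
  Putting \<open>y = e\<^sup>4\<^sup>z\<close> and multiplying by \<open>e\<^sup>-\<^sup>n\<^sup>z\<close> turns \<open>P\<^sub>n\<close> into the moment generating function
  of \<open>4 S\<^sub>2 - n\<close>: the \<open>j\<close>-th term becomes a multiple of \<open>(sinh z)\<^sup>j (cosh z)\<^sup>n\<^sup>-\<^sup>j\<close>.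
  As \<open>sinh z = O(z)\<close>, only \<open>j \<le> k\<close> contributes to the coefficient of \<open>z\<^sup>k\<close>; the ratios
  \<open>(1/2 choose n-j)/(1/2 choose n)\<close> tend to \<open>(-1)\<^sup>j\<close>, and expanding
  \<open>cosh\<^sup>n\<^sup>-\<^sup>j z = (1 + z\<^sup>2/2 + \<dots>)\<^sup>n\<^sup>-\<^sup>j\<close> binomially, the dominant part is
  \<open>(n-j choose \<lfloor>k/2\<rfloor>) \<sim> n\<^bsup>\<lfloor>k/2\<rfloor>\<^esup>/\<lfloor>k/2\<rfloor>!\<close>, coming from \<open>j = 0\<close> for even
  and \<open>j = 1\<close> for odd \<open>k\<close>.
\<close>

unbundle fps_syntax

section \<open>Order-2 branches and the root decomposition\<close>

lemma leaves_pos: "leaves t > 0"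
  by (induction t) auto

lemma hs_order_ge_1: "hs_order t \<ge> 1"
  by (induction t) auto

lemma hs_order_child_le:
  "hs_order l \<le> hs_order (Node l r)" "hs_order r \<le> hs_order (Node l r)"
  by (cases "hs_order l = hs_order r"; simp)+

lemma hs_order_Node_ge_2: "hs_order (Node l r) \<ge> 2"
  using hs_order_ge_1[of l] hs_order_ge_1[of r] by auto

lemma hs_order_eq_1_iff: "hs_order t = 1 \<longleftrightarrow> t = Leaf"
proof (cases t)
  case (Node l r)
  then show ?thesis using hs_order_Node_ge_2[of l r] by auto
qed simp

lemma branches_aux_parent_irrelevant:
  "p \<noteq> q \<Longrightarrow> q \<noteq> 0 \<Longrightarrow> branches_aux q p t = branches_aux q 0 t"
  by (cases t) auto

lemma branches_aux_2_2: "hs_order t \<le> 2 \<Longrightarrow> branches_aux 2 2 t = 0"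
proof (induction t)
  case (Node l r)
  have "hs_order l \<le> 2" "hs_order r \<le> 2"
    using Node.prems hs_order_child_le[where l = l and r = r] by linarith+
  moreover have "hs_order (Node l r) = 2"
    using Node.prems hs_order_Node_ge_2[of l r] by linarith
  ultimately show ?case
    using Node.IH by (simp del: hs_order.simps)
qed simp

lemma S2_order_2: "hs_order t = 2 \<Longrightarrow> S2 t = 1"
proof (cases t)
  case (Node l r)
  assume order: "hs_order t = 2"
  then have "hs_order l \<le> 2" "hs_order r \<le> 2"
    using Node hs_order_child_le[where l = l and r = r] by simp_all
  with order Node show ?thesis
    using branches_aux_2_2 unfolding branches_def by (simp del: hs_order.simps)
qed simp

lemma S2_Leaf: "S2 Leaf = 0"
  by (simp add: branches_def)

lemma S2_Node: "S2 (Node l r) = (if l = Leaf \<and> r = Leaf then 1 else S2 l + S2 r)"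
proof (cases "hs_order (Node l r) = 2")
  case True
  then have "l = Leaf \<and> r = Leaf \<or> l = Leaf \<and> hs_order r = 2 \<or> r = Leaf \<and> hs_order l = 2"
    using hs_order_ge_1[of l] hs_order_ge_1[of r] hs_order_eq_1_iff[of l] hs_order_eq_1_iff[of r]
    by (auto split: if_splits)
  with True show ?thesis
    using S2_order_2 S2_Leaf by (metis add_0 add.right_neutral)
next
  case False
  then have "\<not> (l = Leaf \<and> r = Leaf)" by auto
  with False show ?thesis
    using branches_aux_parent_irrelevant[of "hs_order (Node l r)" 2]
    unfolding branches_def by (simp del: hs_order.simps)
qed

lemma Omega_0: "Omega 0 = {}"
  using leaves_pos by (auto simp: Omega_def)

lemma Omega_1: "Omega (Suc 0) = {Leaf}"
proof -
  have "t = Leaf" if "leaves t = 1" for t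
  proof (cases t)
    case (Node l r)
    then show ?thesis using that leaves_pos[of l] leaves_pos[of r] by simp
  qed simp
  then show ?thesis by (auto simp: Omega_def)
qed

lemma Leaf_in_Omega_iff: "Leaf \<in> Omega i \<longleftrightarrow> i = 1"
  by (auto simp: Omega_def)

lemma Omega_Suc_Suc: "Omega (Suc (Suc m)) =
   (\<lambda>(l, r). Node l r) ` (\<Union>i\<in>{1..Suc m}. Omega i \<times> Omega (Suc (Suc m) - i))"
proof -
  have "t \<in> (\<lambda>(l, r). Node l r) ` (\<Union>i\<in>{1..Suc m}. Omega i \<times> Omega (Suc (Suc m) - i))"
    if "t \<in> Omega (Suc (Suc m))" for t
  proof -
    from that obtain l r where "t = Node l r" "leaves l + leaves r = Suc (Suc m)"
      by (cases t) (auto simp: Omega_def)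
    then show ?thesis
      using leaves_pos[of l] leaves_pos[of r]
      by (auto simp: Omega_def image_iff intro!: bexI[of _ "leaves l"])
  qed
  then show ?thesis by (auto simp: Omega_def)
qed

lemma finite_Omega: "finite (Omega n)"
proof (induction n rule: less_induct)
  case (less n)
  consider "n = 0" | "n = Suc 0" | m where "n = Suc (Suc m)"
    by (metis not0_implies_Suc)
  then show ?case
    by cases (use less in \<open>auto simp: Omega_0 Omega_1 Omega_Suc_Suc\<close>)
qed

lemma sum_Omega_Suc_Suc:
  "(\<Sum>t\<in>Omega (Suc (Suc m)). f t) =
   (\<Sum>i=1..Suc m. \<Sum>l\<in>Omega i. \<Sum>r\<in>Omega (Suc (Suc m) - i). f (Node l r))"
proof -
  have "inj_on (\<lambda>(l, r). Node l r) X" for X by (auto simp: inj_on_def)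
  then have "(\<Sum>t\<in>Omega (Suc (Suc m)). f t) =
      (\<Sum>(l, r)\<in>(\<Union>i\<in>{1..Suc m}. Omega i \<times> Omega (Suc (Suc m) - i)). f (Node l r))"
    unfolding Omega_Suc_Suc by (subst sum.reindex) (auto simp: case_prod_beta)
  also have "\<dots> = (\<Sum>i=1..Suc m. \<Sum>(l, r)\<in>Omega i \<times> Omega (Suc (Suc m) - i). f (Node l r))"
    by (rule sum.UNION_disjoint) (auto simp: finite_Omega[unfolded Omega_def] Omega_def)
  finally show ?thesis by (simp add: sum.cartesian_product)
qed

section \<open>The generating polynomial of \<open>S\<^sub>2\<close>\<close>

definition S2_gen :: "'a::comm_ring_1 \<Rightarrow> nat \<Rightarrow> 'a" where
  "S2_gen y n = (\<Sum>t\<in>Omega n. y ^ S2 t)"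

lemma S2_gen_0: "S2_gen y 0 = 0"
  by (simp add: S2_gen_def Omega_0)

lemma S2_gen_1: "S2_gen y (Suc 0) = 1"
  by (simp add: S2_gen_def Omega_1 S2_Leaf)

lemma S2_gen_Suc_Suc: "S2_gen y (Suc (Suc m)) =
   (\<Sum>i=1..Suc m. S2_gen y i * S2_gen y (Suc (Suc m) - i)) + (if m = 0 then y - 1 else 0)"
proof -
  define corr :: "btree \<Rightarrow> btree \<Rightarrow> 'a" where
    "corr l r = (if l = Leaf \<and> r = Leaf then y - 1 else 0)" for l r
  have node: "y ^ S2 (Node l r) = y ^ S2 l * y ^ S2 r + corr l r" for l r
    by (simp add: S2_Node S2_Leaf corr_def power_add)
  have corr_sum: "(\<Sum>l\<in>Omega i. \<Sum>r\<in>Omega (Suc (Suc m) - i). corr l r)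
      = (if i = 1 \<and> m = 0 then y - 1 else 0)" for i
  proof -
    have "(\<Sum>r\<in>Omega j. corr l r) = (if l = Leaf then if j = 1 then y - 1 else 0 else 0)" for l j
      by (cases "l = Leaf") (auto simp: corr_def finite_Omega Leaf_in_Omega_iff)
    then show ?thesis
      by (simp add: finite_Omega Leaf_in_Omega_iff)
  qed
  have "S2_gen y (Suc (Suc m)) = (\<Sum>i=1..Suc m. \<Sum>l\<in>Omega i. \<Sum>r\<in>Omega (Suc (Suc m) - i).
      y ^ S2 l * y ^ S2 r + corr l r)"
    unfolding S2_gen_def sum_Omega_Suc_Suc node ..
  also have "\<dots> = (\<Sum>i=1..Suc m. S2_gen y i * S2_gen y (Suc (Suc m) - i)) +
     (\<Sum>i=1..Suc m. if i = 1 \<and> m = 0 then y - 1 else 0)"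
    unfolding sum.distrib corr_sum S2_gen_def sum_product by (simp add: mult.commute)
  also have "(\<Sum>i=1..Suc m. if i = 1 \<and> m = 0 then y - 1 else (0::'a)) = (if m = 0 then y - 1 else 0)"
    by (cases "m = 0") auto
  finally show ?thesis .
qed

lemma S2_gen_fps_equation:
  fixes y :: "'a::comm_ring_1"
  defines "G \<equiv> Abs_fps (S2_gen y)"
  shows "G = G\<^sup>2 + fps_X + (fps_const y - 1) * fps_X\<^sup>2"
proof (rule fps_ext)
  fix n
  have G0: "G $ 0 = 0" by (simp add: G_def S2_gen_0)
  consider "n = 0" | "n = Suc 0" | m where "n = Suc (Suc m)"
    by (metis not0_implies_Suc)
  then show "G $ n = (G\<^sup>2 + fps_X + (fps_const y - 1) * fps_X\<^sup>2) $ n"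
  proof cases
    case 3
    have "(G\<^sup>2) $ n = (\<Sum>i=1..Suc m. G $ i * G $ (n - i))"
      unfolding power2_eq_square fps_mult_nth 3
      by (simp add: sum.atLeast0_atMost_Suc sum.atLeast_Suc_atMost G0)
    with 3 show ?thesis
      by (simp add: G_def S2_gen_Suc_Suc fps_X_power_mult_right_nth)
  qed (simp_all add: power2_eq_square fps_mult_nth_1 G0 fps_X_power_mult_right_nth;
       simp add: G_def S2_gen_0 S2_gen_1)+
qed

lemma fps_quadratic_root_unique:
  fixes F G :: "'a::idom fps"
  assumes "F\<^sup>2 - 2 * F = G\<^sup>2 - 2 * G" and "F $ 0 = 0" and "G $ 0 = 0" and "(2::'a) \<noteq> 0"
  shows "F = G"
proof -
  have "(F - G) * (F + G - 2) = 0"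
    using assms(1) by (simp add: algebra_simps power2_eq_square)
  moreover have "F + G - 2 \<noteq> 0"
  proof
    assume "F + G - 2 = 0"
    then have "(F + G - 2) $ 0 = 0" by simp
    with assms(2-4) show False by (simp add: numeral_fps_const)
  qed
  ultimately show ?thesis by simp
qed

lemma fps_const_sum: "fps_const (\<Sum>i\<in>A. f i) = (\<Sum>i\<in>A. fps_const (f i))"
  by (rule fps_ext) (simp add: fps_sum_nth)

definition sqrt_coeff :: "nat \<Rightarrow> real" where
  "sqrt_coeff m = (1/2) gchoose m"

text \<open>\<open>sqrt_series a\<close> is \<open>\<surd>(1 - a x)\<close> as a series in \<open>x\<close>; its coefficients are series in the
  variable \<open>z\<close> of the moment generating function below.\<close>

definition sqrt_series :: "real fps \<Rightarrow> real fps fps" where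
  "sqrt_series a = Abs_fps (\<lambda>j. fps_const (sqrt_coeff j) * (-a) ^ j)"

lemma sqrt_series_0: "sqrt_series a $ 0 = 1"
  by (simp add: sqrt_series_def sqrt_coeff_def)

lemma sqrt_series_square: "sqrt_series a * sqrt_series a = 1 - fps_const a * fps_X"
proof (rule fps_ext)
  fix n
  have "(sqrt_series a * sqrt_series a) $ n =
      fps_const (\<Sum>i=0..n. sqrt_coeff i * sqrt_coeff (n - i)) * (-a) ^ n"
    unfolding fps_mult_nth sqrt_series_def fps_const_sum sum_distrib_right
    by (intro sum.cong refl) (simp add: power_add[symmetric] mult_ac)
  also have "(\<Sum>i=0..n. sqrt_coeff i * sqrt_coeff (n - i)) = (1::real) gchoose n"
    using gbinomial_Vandermonde[of "1/2::real" "1/2" n] by (simp add: sqrt_coeff_def)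
  also have "(1::real) gchoose n = (if n \<le> 1 then 1 else 0)"
    using binomial_gbinomial[of 1 n, where 'a = real] by (cases n) (auto simp: binomial_eq_0)
  finally show "(sqrt_series a * sqrt_series a) $ n = (1 - fps_const a * fps_X) $ n"
    by (cases "n = 0 \<or> n = 1") (auto simp: fps_X_nth)
qed

lemma S2_gen_sqrt_formula:
  fixes \<alpha> \<beta> y :: "real fps"
  assumes sum: "\<alpha> + \<beta> = 4" and prod: "\<alpha> * \<beta> = 4 * (1 - y)"
  shows "1 - sqrt_series \<beta> * sqrt_series \<alpha> = 2 * Abs_fps (S2_gen y)"
proof (rule fps_quadratic_root_unique)
  define P where "P = sqrt_series \<beta> * sqrt_series \<alpha>"
  define G where "G = Abs_fps (S2_gen y)"
  have const_eqs: "fps_const (\<alpha> + \<beta>) = 4" "fps_const (\<alpha> * \<beta>) = 4 * (1 - fps_const y)"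
    using sum prod by (simp_all add: numeral_fps_const)
      (metis fps_const_mult fps_const_sub fps_const_1_eq_1 numeral_fps_const)
  have "P\<^sup>2 = (sqrt_series \<beta> * sqrt_series \<beta>) * (sqrt_series \<alpha> * sqrt_series \<alpha>)"
    by (simp add: P_def power2_eq_square mult_ac)
  also have "\<dots> = (1 - fps_const \<beta> * fps_X) * (1 - fps_const \<alpha> * fps_X)"
    by (simp only: sqrt_series_square)
  also have "\<dots> = 1 - fps_const (\<alpha> + \<beta>) * fps_X + fps_const (\<alpha> * \<beta>) * fps_X\<^sup>2"
    unfolding fps_const_add[symmetric] fps_const_mult[symmetric] power2_eq_square by algebra
  finally have "P\<^sup>2 = 1 - 4 * fps_X + 4 * (1 - fps_const y) * fps_X\<^sup>2"
    unfolding const_eqs .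
  with S2_gen_fps_equation[of y, folded G_def]
  show "(1 - P)\<^sup>2 - 2 * (1 - P) = (2 * G)\<^sup>2 - 2 * (2 * G)"
    by algebra
  show "(1 - P) $ 0 = 0" by (simp add: P_def sqrt_series_0)
  show "(2 * G) $ 0 = 0" by (simp add: G_def numeral_fps_const S2_gen_0)
  show "(2::real fps) \<noteq> 0" by (simp add: numeral_fps_const)
qed

lemma S2_gen_explicit:
  fixes \<alpha> \<beta> y :: "real fps"
  assumes "\<alpha> + \<beta> = 4" and "\<alpha> * \<beta> = 4 * (1 - y)" and "n \<ge> 1"
  shows "2 * S2_gen y n =
    - (\<Sum>j=0..n. fps_const (sqrt_coeff j * sqrt_coeff (n - j)) * ((- \<beta>) ^ j * (- \<alpha>) ^ (n - j)))"
proof -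
  have "(1 - sqrt_series \<beta> * sqrt_series \<alpha>) $ n = (2 * Abs_fps (S2_gen y)) $ n"
    using S2_gen_sqrt_formula[OF assms(1,2)] by simp
  moreover have "(sqrt_series \<beta> * sqrt_series \<alpha>) $ n =
      (\<Sum>j=0..n. fps_const (sqrt_coeff j * sqrt_coeff (n - j)) * ((- \<beta>) ^ j * (- \<alpha>) ^ (n - j)))"
    unfolding fps_mult_nth sqrt_series_def fps_nth_Abs_fps fps_const_mult[symmetric]
    by (simp only: mult_ac)
  ultimately show ?thesis
    using assms(3) by (simp add: numeral_fps_const)
qed

section \<open>The moment generating function of \<open>4 S\<^sub>2 - n\<close>\<close>

text \<open>The series \<open>(cosh z - 1)/z\<^sup>2\<close> and \<open>sinh z / z\<close>.\<close>

definition cosh_tail :: "real fps" where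
  "cosh_tail = Abs_fps (\<lambda>m. if even m then 1 / fact (m + 2) else 0)"

definition sinhc :: "real fps" where
  "sinhc = Abs_fps (\<lambda>m. if even m then 1 / fact (m + 1) else 0)"

lemma fps_exp_plus_exp_neg: "fps_exp 1 + fps_exp (-1) = 2 * (1 + fps_X\<^sup>2 * cosh_tail)"
proof (rule fps_ext)
  fix m
  consider "m = 0" | "m = 1" | q where "m = Suc (Suc q)"
    by (metis One_nat_def not0_implies_Suc)
  then show "(fps_exp 1 + fps_exp (-1)) $ m = (2 * (1 + fps_X\<^sup>2 * cosh_tail)) $ m"
    by cases (simp_all add: numeral_fps_const fps_X_power_mult_nth cosh_tail_def, simp add: field_simps)
qed

lemma fps_exp_minus_exp_neg: "fps_exp 1 - fps_exp (-1) = 2 * (fps_X * sinhc)"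
proof (rule fps_ext)
  fix m
  show "(fps_exp 1 - fps_exp (-1)) $ m = (2 * (fps_X * sinhc)) $ m"
    by (cases m) (simp_all add: numeral_fps_const sinhc_def, simp add: field_simps)
qed

text \<open>With \<open>\<alpha>, \<beta> = 2(1 \<plusminus> e\<^sup>2\<^sup>z)\<close>, each of the \<open>n\<close> factors \<open>-\<beta>, -\<alpha>\<close> absorbs one factor
  \<open>e\<^sup>-\<^sup>z\<close> and becomes \<open>4 sinh z\<close> or \<open>-4 cosh z\<close>.\<close>

lemma fps_exp_neg_times_sqrt_term:
  assumes "j \<le> n"
  shows "fps_exp (- real n) * ((- (2 * (1 - fps_exp 2))) ^ j * (- (2 * (1 + fps_exp 2))) ^ (n - j)) =
    fps_const ((-1) ^ j * (-4) ^ n) * (fps_X ^ j * sinhc ^ j * (1 + fps_X\<^sup>2 * cosh_tail) ^ (n - j))"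
proof -
  define e where "e = fps_exp (-1::real)"
  define B where "B = - (2 * (1 - fps_exp (2::real)))"
  define A where "A = - (2 * (1 + fps_exp (2::real)))"
  have e2: "fps_exp 2 * e = fps_exp 1"
    by (simp add: e_def flip: fps_exp_add_mult)
  have B: "B * e = 2 * (fps_exp 1 - e)" and A: "A * e = - 2 * (fps_exp 1 + e)"
    using e2 by (simp_all add: A_def B_def algebra_simps)
  have "e ^ j * e ^ (n - j) = e ^ n"
    using assms by (simp flip: power_add)
  then have "fps_exp (- real n) = e ^ j * e ^ (n - j)"
    by (simp add: e_def fps_exp_power_mult)
  then have "fps_exp (- real n) * (B ^ j * A ^ (n - j)) = (B * e) ^ j * (A * e) ^ (n - j)"
    by (simp only: power_mult_distrib mult_ac)
  also have "\<dots> = (2 * (fps_exp 1 - e)) ^ j * (- 2 * (fps_exp 1 + e)) ^ (n - j)"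
    unfolding A B ..
  also have "\<dots> = (4 * (fps_X * sinhc)) ^ j * (- 4 * (1 + fps_X\<^sup>2 * cosh_tail)) ^ (n - j)"
    unfolding e_def fps_exp_plus_exp_neg fps_exp_minus_exp_neg by (simp only: mult.assoc[symmetric]) simp
  also have "\<dots> = 4 ^ j * (- 4) ^ (n - j) * (fps_X ^ j * sinhc ^ j * (1 + fps_X\<^sup>2 * cosh_tail) ^ (n - j))"
    by (simp only: power_mult_distrib mult_ac)
  also have "(4::real fps) ^ j * (- 4) ^ (n - j) = fps_const ((-1) ^ j * (-4) ^ n)"
  proof -
    have "(-1::real) ^ j * (-4) ^ n = ((-1) * (-4)) ^ j * (-4) ^ (n - j)"
      using assms by (simp only: power_mult_distrib mult.assoc flip: power_add) simp
    then show ?thesis by (simp add: numeral_fps_const fps_const_power)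
  qed
  finally show ?thesis unfolding A_def B_def .
qed

lemma sum_Omega_exp_S2:
  assumes "n \<ge> 1"
  shows "2 * (\<Sum>t\<in>Omega n. fps_exp (4 * real (S2 t) - real n)) =
    - (\<Sum>j=0..n. fps_const (sqrt_coeff j * sqrt_coeff (n - j) * (-1) ^ j * (-4) ^ n) *
        (fps_X ^ j * sinhc ^ j * (1 + fps_X\<^sup>2 * cosh_tail) ^ (n - j)))"
proof -
  define \<alpha> where "\<alpha> = 2 * (1 + fps_exp (2::real))"
  define \<beta> where "\<beta> = 2 * (1 - fps_exp (2::real))"
  define y where "y = fps_exp (4::real)"
  have "\<alpha> * \<beta> = 4 * (1 - fps_exp 2 * fps_exp 2)"
    by (simp add: \<alpha>_def \<beta>_def algebra_simps)
  also have "fps_exp 2 * fps_exp 2 = y"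
    by (simp add: y_def flip: fps_exp_add_mult)
  finally have S2_gen_n: "2 * S2_gen y n =
      - (\<Sum>j=0..n. fps_const (sqrt_coeff j * sqrt_coeff (n - j)) * ((- \<beta>) ^ j * (- \<alpha>) ^ (n - j)))"
    using assms by (intro S2_gen_explicit) (simp_all add: \<alpha>_def \<beta>_def)
  have "(\<Sum>t\<in>Omega n. fps_exp (4 * real (S2 t) - real n)) = fps_exp (- real n) * S2_gen y n"
    unfolding S2_gen_def sum_distrib_left y_def
    by (intro sum.cong refl) (simp add: fps_exp_power_mult algebra_simps flip: fps_exp_add_mult)
  then have "2 * (\<Sum>t\<in>Omega n. fps_exp (4 * real (S2 t) - real n)) = fps_exp (- real n) * (2 * S2_gen y n)"
    by (simp add: mult.left_commute)
  also have "\<dots> = - (\<Sum>j=0..n. fps_const (sqrt_coeff j * sqrt_coeff (n - j)) *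
          (fps_exp (- real n) * ((- \<beta>) ^ j * (- \<alpha>) ^ (n - j))))"
    by (simp only: S2_gen_n sum_distrib_left mult_minus_right mult.left_commute[of "fps_exp _"])
  also have "\<dots> = - (\<Sum>j=0..n. fps_const (sqrt_coeff j * sqrt_coeff (n - j)) *
          (fps_const ((-1) ^ j * (-4) ^ n) *
            (fps_X ^ j * sinhc ^ j * (1 + fps_X\<^sup>2 * cosh_tail) ^ (n - j))))"
    unfolding \<alpha>_def \<beta>_def
    by (intro arg_cong[where f = uminus] sum.cong refl arg_cong[where f = "(*) _"]
        fps_exp_neg_times_sqrt_term) simp
  finally show ?thesis
    by (simp only: mult.assoc[symmetric] fps_const_mult)
qed

definition sinhc_cosh_coeff :: "nat \<Rightarrow> nat \<Rightarrow> nat \<Rightarrow> real" where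
  "sinhc_cosh_coeff j m r = (sinhc ^ j * (1 + fps_X\<^sup>2 * cosh_tail) ^ m) $ r"

lemma sum_Omega_S2_power:
  assumes "n \<ge> 1" and "k \<le> n"
  shows "2 * (\<Sum>t\<in>Omega n. (4 * real (S2 t) - real n) ^ k / fact k) =
    - (\<Sum>j=0..k. sqrt_coeff j * sqrt_coeff (n - j) * (-1) ^ j * (-4) ^ n * sinhc_cosh_coeff j (n - j) (k - j))"
proof -
  have coeff: "(fps_const a * (fps_X ^ j * sinhc ^ j * (1 + fps_X\<^sup>2 * cosh_tail) ^ m)) $ k =
      (if k < j then 0 else a * sinhc_cosh_coeff j m (k - j))" for a j m
    by (simp add: mult.assoc fps_X_power_mult_nth sinhc_cosh_coeff_def)
  have "2 * (\<Sum>t\<in>Omega n. (4 * real (S2 t) - real n) ^ k / fact k) =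
      (2 * (\<Sum>t\<in>Omega n. fps_exp (4 * real (S2 t) - real n))) $ k"
    by (simp add: numeral_fps_const fps_sum_nth)
  also have "\<dots> = - (\<Sum>j=0..n. if k < j then 0 else
      sqrt_coeff j * sqrt_coeff (n - j) * (-1) ^ j * (-4) ^ n * sinhc_cosh_coeff j (n - j) (k - j))"
    unfolding sum_Omega_exp_S2[OF assms(1)] fps_neg_nth fps_sum_nth coeff ..
  also have "(\<Sum>j=0..n. if k < j then 0 else
      sqrt_coeff j * sqrt_coeff (n - j) * (-1) ^ j * (-4) ^ n * sinhc_cosh_coeff j (n - j) (k - j)) =
    (\<Sum>j=0..k. sqrt_coeff j * sqrt_coeff (n - j) * (-1) ^ j * (-4) ^ n * sinhc_cosh_coeff j (n - j) (k - j))"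
    by (rule sum.mono_neutral_cong_right) (use assms(2) in auto)
  finally show ?thesis .
qed

lemma card_Omega:
  assumes "n \<ge> 1"
  shows "2 * real (card (Omega n)) = - ((-4) ^ n * sqrt_coeff n)"
  using sum_Omega_S2_power[OF assms, of 0]
  by (simp add: sinhc_cosh_coeff_def fps_power_zeroth sqrt_coeff_def)

lemma sqrt_coeff_nonzero: "sqrt_coeff n \<noteq> 0"
proof -
  have "(1/2::real) - of_nat i \<noteq> 0" for i
  proof
    assume "(1/2::real) - of_nat i = 0"
    then have "2 * i = 1" by linarith
    then show False by presburger
  qed
  then have "fact n * sqrt_coeff n \<noteq> 0"
    unfolding sqrt_coeff_def gbinomial_mult_fact by (simp add: prod_zero_iff)
  then show ?thesis by simp
qed

definition sqrt_coeff_ratio :: "nat \<Rightarrow> nat \<Rightarrow> real" where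
  "sqrt_coeff_ratio j n = (-1) ^ j * sqrt_coeff (n - j) / sqrt_coeff n"

lemma expect_S2_central_power:
  assumes "n \<ge> 1" and "k \<le> n"
  shows "expect n (\<lambda>t. (real (S2 t) - real n / 4) ^ k) =
    fact k / 4 ^ k * (\<Sum>j=0..k. sqrt_coeff j * sqrt_coeff_ratio j n * sinhc_cosh_coeff j (n - j) (k - j))"
proof -
  have "(real (S2 t) - real n / 4) ^ k = fact k / 4 ^ k * ((4 * real (S2 t) - real n) ^ k / fact k)" for t
    by (simp add: field_simps flip: power_divide)
  then have "expect n (\<lambda>t. (real (S2 t) - real n / 4) ^ k) =
      fact k / 4 ^ k * (\<Sum>t\<in>Omega n. (4 * real (S2 t) - real n) ^ k / fact k) / real (card (Omega n))"
    by (simp only: expect_def sum_distrib_left)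
  also have "\<dots> = fact k / 4 ^ k * (2 * (\<Sum>t\<in>Omega n. (4 * real (S2 t) - real n) ^ k / fact k))
        / (2 * real (card (Omega n)))"
    by simp
  also have "\<dots> = fact k / 4 ^ k *
      (\<Sum>j=0..k. sqrt_coeff j * sqrt_coeff_ratio j n * sinhc_cosh_coeff j (n - j) (k - j))"
  proof -
    have "(\<Sum>j=0..k. sqrt_coeff j * sqrt_coeff (n - j) * (-1) ^ j * (-4) ^ n *
          sinhc_cosh_coeff j (n - j) (k - j)) =
        ((-4) ^ n * sqrt_coeff n) *
          (\<Sum>j=0..k. sqrt_coeff j * sqrt_coeff_ratio j n * sinhc_cosh_coeff j (n - j) (k - j))"
      unfolding sum_distrib_left sqrt_coeff_ratio_def using sqrt_coeff_nonzero[of n]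
      by (intro sum.cong refl) (simp add: field_simps)
    moreover have "(-4::real) ^ n * sqrt_coeff n \<noteq> 0"
      using sqrt_coeff_nonzero[of n] by simp
    ultimately show ?thesis
      unfolding sum_Omega_S2_power[OF assms] card_Omega[OF assms(1)] by simp
  qed
  finally show ?thesis .
qed

definition sinhc_cosh_term :: "nat \<Rightarrow> nat \<Rightarrow> nat \<Rightarrow> real" where
  "sinhc_cosh_term j i r = (fps_X ^ (2 * i) * sinhc ^ j * cosh_tail ^ i) $ r"

lemma sinhc_cosh_term_eq_0: "r < 2 * i \<Longrightarrow> sinhc_cosh_term j i r = 0"
  by (simp add: sinhc_cosh_term_def mult.assoc fps_X_power_mult_nth)

lemma sinhc_cosh_coeff_expand:
  "sinhc_cosh_coeff j m r = (\<Sum>i=0..r. real (m choose i) * sinhc_cosh_term j i r)"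
proof -
  have "sinhc ^ j * (1 + fps_X\<^sup>2 * cosh_tail) ^ m =
      (\<Sum>i\<le>m. fps_const (real (m choose i)) * (fps_X ^ (2 * i) * sinhc ^ j * cosh_tail ^ i))"
    unfolding binomial_ring[of _ 1, simplified add.commute[of _ 1]]
    by (simp add: sum_distrib_left power_mult_distrib fps_of_nat mult_ac flip: power_mult)
  then have "sinhc_cosh_coeff j m r = (\<Sum>i\<le>m. real (m choose i) * sinhc_cosh_term j i r)"
    by (simp add: sinhc_cosh_coeff_def sinhc_cosh_term_def fps_sum_nth)
  also have "\<dots> = (\<Sum>i\<le>m + r. real (m choose i) * sinhc_cosh_term j i r)"
    by (rule sum.mono_neutral_left) auto
  also have "\<dots> = (\<Sum>i=0..r. real (m choose i) * sinhc_cosh_term j i r)"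
    by (rule sum.mono_neutral_right) (auto simp: sinhc_cosh_term_eq_0)
  finally show ?thesis .
qed

section \<open>Asymptotics of the central moments\<close>

lemma sqrt_coeff_Suc: "real (Suc m) * sqrt_coeff (Suc m) = (1/2 - real m) * sqrt_coeff m"
  using gbinomial_mult_1[of "1/2::real" m] by (simp add: sqrt_coeff_def algebra_simps)

lemma sqrt_coeff_ratio_Suc:
  assumes "n \<ge> Suc (Suc j)"
  shows "sqrt_coeff_ratio (Suc j) n = sqrt_coeff_ratio j n * ((real n - real j) / (real n - real j - 3/2))"
proof -
  define m where "m = n - Suc j"
  have m: "n - j = Suc m" "real m = real n - real j - 1"
    using assms by (simp_all add: m_def of_nat_diff)
  have "(real n - real j) * sqrt_coeff (Suc m) = - (real n - real j - 3/2) * sqrt_coeff m"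
    using sqrt_coeff_Suc[of m] unfolding of_nat_Suc m(2) by (simp add: algebra_simps)
  moreover have "real n - real j - 3/2 \<noteq> 0"
  proof
    assume "real n - real j - 3/2 = 0"
    then have "2 * n = 2 * j + 3" by linarith
    then show False by presburger
  qed
  ultimately have c_m: "sqrt_coeff m = - ((real n - real j) / (real n - real j - 3/2)) * sqrt_coeff (Suc m)"
    by (simp add: field_simps)
  have "sqrt_coeff_ratio (Suc j) n = (-1) ^ Suc j * sqrt_coeff m / sqrt_coeff n"
    by (simp add: sqrt_coeff_ratio_def m_def)
  also have "\<dots> = (-1) ^ j * sqrt_coeff (Suc m) / sqrt_coeff n * ((real n - real j) / (real n - real j - 3/2))"
    unfolding c_m by (simp add: mult_ac)
  also have "\<dots> = sqrt_coeff_ratio j n * ((real n - real j) / (real n - real j - 3/2))"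
    by (simp add: sqrt_coeff_ratio_def m(1))
  finally show ?thesis .
qed

lemma sqrt_coeff_ratio_tendsto: "((\<lambda>n. sqrt_coeff_ratio j n) \<longlongrightarrow> 1) at_top"
proof (induction j)
  case 0
  show ?case by (simp add: sqrt_coeff_ratio_def sqrt_coeff_nonzero)
next
  case (Suc j)
  have "((\<lambda>n. sqrt_coeff_ratio j n * ((real n - real j) / (real n - real j - 3/2)))
      \<longlongrightarrow> 1 * 1) at_top"
    by (intro tendsto_mult Suc.IH) real_asymp
  moreover have "eventually (\<lambda>n. sqrt_coeff_ratio j n * ((real n - real j) / (real n - real j - 3/2)) =
      sqrt_coeff_ratio (Suc j) n) at_top"
    using eventually_ge_at_top[of "Suc (Suc j)"] by eventually_elim (simp add: sqrt_coeff_ratio_Suc)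
  ultimately show ?case
    using Lim_transform_eventually by fastforce
qed

lemma binomial_diff_over_power_tendsto:
  assumes "i \<le> d"
  shows "((\<lambda>n. real ((n - j) choose i) / real n ^ d)
    \<longlongrightarrow> (if i = d then 1 / fact d else 0)) at_top"
proof -
  have ev: "eventually (\<lambda>n. (\<Prod>l\<in>{0..<i}. (real n - real j - real l) / real n) / fact i
      * (1 / real n ^ (d - i)) = real ((n - j) choose i) / real n ^ d) at_top"
    using eventually_ge_at_top[of "Suc j"]
  proof eventually_elim
    case (elim n)
    have "real ((n - j) choose i) = (\<Prod>l\<in>{0..<i}. real n - real j - real l) / fact i"
      using elim by (simp add: binomial_gbinomial of_nat_diff flip: gbinomial_mult_fact')
    moreover have "real n ^ d = real n ^ i * real n ^ (d - i)"
      using assms by (simp flip: power_add)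
    ultimately show ?case
      using elim by (simp add: prod_dividef)
  qed
  have lim_power: "((\<lambda>n. 1 / real n ^ (d - i)) \<longlongrightarrow> (if i = d then 1 else 0)) at_top"
  proof (cases "i = d")
    case False
    then have "d - i > 0" using assms by simp
    then have "filterlim (\<lambda>n. real n ^ (d - i)) at_infinity at_top"
      by (intro filterlim_at_top_imp_at_infinity filterlim_pow_at_top filterlim_real_sequentially)
    with False show ?thesis
      by (simp add: tendsto_divide_0[OF tendsto_const])
  qed simp
  have lim_factor: "((\<lambda>n. (real n - real j - real l) / real n) \<longlongrightarrow> 1) at_top" for l
    by real_asymp
  have "((\<lambda>n. (\<Prod>l\<in>{0..<i}. (real n - real j - real l) / real n) / fact i * (1 / real n ^ (d - i)))
      \<longlongrightarrow> (\<Prod>l\<in>{0..<i}. 1) / fact i * (if i = d then 1 else 0)) at_top"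
    by (intro tendsto_mult tendsto_divide tendsto_prod lim_factor lim_power tendsto_const) simp
  then have "((\<lambda>n. real ((n - j) choose i) / real n ^ d)
      \<longlongrightarrow> (\<Prod>l\<in>{0..<i}. 1) / fact i * (if i = d then 1 else 0)) at_top"
    by (rule Lim_transform_eventually[OF _ ev])
  then show ?thesis
    by (cases "i = d") simp_all
qed

lemma sum_sqrt_coeff_leading_term:
  "(\<Sum>j=0..k. sqrt_coeff j * sinhc_cosh_term j (k div 2) (k - j)) = (1/2) ^ ((k + 1) div 2)"
proof -
  define d where "d = k div 2"
  have cosh_tail_power_1: "(cosh_tail ^ i) $ Suc 0 = 0" for i
    by (induction i) (simp_all add: fps_mult_nth_1 cosh_tail_def)
  have coeffs_0: "cosh_tail $ 0 = 1/2" "sinhc $ 0 = 1"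
    by (simp_all add: cosh_tail_def sinhc_def)
  have "(\<Sum>j=0..k. sqrt_coeff j * sinhc_cosh_term j d (k - j)) =
      (\<Sum>j=0..k - 2 * d. sqrt_coeff j * (sinhc ^ j * cosh_tail ^ d) $ (k - j - 2 * d))"
    using div_times_less_eq_dividend[of k 2] unfolding d_def[symmetric]
    by (intro sum.mono_neutral_cong_right)
      (auto simp: sinhc_cosh_term_def mult.assoc fps_X_power_mult_nth)
  also have "\<dots> = (1/2) ^ ((k + 1) div 2)"
  proof (cases "even k")
    case True
    then have "k = 2 * d" by (simp add: d_def)
    then show ?thesis
      by (simp add: sqrt_coeff_def fps_power_zeroth coeffs_0)
  next
    case False
    then have "k = Suc (2 * d)" by (simp add: d_def)
    then show ?thesis
      by (simp add: sqrt_coeff_def fps_power_zeroth coeffs_0 cosh_tail_power_1)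
  qed
  finally show ?thesis by (simp add: d_def)
qed

text \<open>For \<open>i > \<lfloor>k/2\<rfloor>\<close> the limit is not that of the binomial quotient: the coefficient
  vanishes instead, since \<open>2i > k \<ge> r\<close>.\<close>

lemma binomial_term_tendsto:
  assumes "r \<le> k"
  shows "((\<lambda>n. real ((n - j) choose i) / real n ^ (k div 2) * sinhc_cosh_term j' i r)
    \<longlongrightarrow> (if i = k div 2 then 1 / fact (k div 2) else 0) * sinhc_cosh_term j' i r) at_top"
proof (cases "2 * i \<le> r")
  case True
  then have "i \<le> k div 2" using assms by simp
  then show ?thesis by (intro tendsto_mult binomial_diff_over_power_tendsto tendsto_const)
qed (simp add: sinhc_cosh_term_eq_0)

lemma expect_S2_central_power_tendsto:
  "((\<lambda>n. expect n (\<lambda>t. (real (S2 t) - real n / 4) ^ k) / real n ^ (k div 2))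
    \<longlongrightarrow> fact k / (2 ^ ((k + 1) div 2) * fact (k div 2) * 4 ^ k)) at_top"
proof -
  define d where "d = k div 2"
  have "eventually (\<lambda>n. fact k / 4 ^ k * (\<Sum>j=0..k. sqrt_coeff j * sqrt_coeff_ratio j n *
      (\<Sum>i=0..k - j. real ((n - j) choose i) / real n ^ d * sinhc_cosh_term j i (k - j)))
      = expect n (\<lambda>t. (real (S2 t) - real n / 4) ^ k) / real n ^ d) at_top"
    using eventually_ge_at_top[of "Suc k"]
  proof eventually_elim
    case (elim n)
    then have "n \<ge> 1" "k \<le> n" by simp_all
    then show ?case
      unfolding expect_S2_central_power[OF \<open>n \<ge> 1\<close> \<open>k \<le> n\<close>] sinhc_cosh_coeff_expand
      by (simp add: sum_divide_distrib sum_distrib_left mult_ac)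
  qed
  moreover have "((\<lambda>n. fact k / 4 ^ k * (\<Sum>j=0..k. sqrt_coeff j * sqrt_coeff_ratio j n *
      (\<Sum>i=0..k - j. real ((n - j) choose i) / real n ^ d * sinhc_cosh_term j i (k - j)))) \<longlongrightarrow>
      fact k / 4 ^ k * (\<Sum>j=0..k. sqrt_coeff j * 1 *
        (\<Sum>i=0..k - j. (if i = d then 1 / fact d else 0) * sinhc_cosh_term j i (k - j)))) at_top"
    unfolding d_def
    by (intro tendsto_mult[OF tendsto_const] tendsto_sum binomial_term_tendsto
        tendsto_mult[OF tendsto_mult[OF tendsto_const sqrt_coeff_ratio_tendsto]]) simp
  ultimately have "((\<lambda>n. expect n (\<lambda>t. (real (S2 t) - real n / 4) ^ k) / real n ^ d) \<longlongrightarrow>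
      fact k / 4 ^ k * (\<Sum>j=0..k. sqrt_coeff j * 1 *
        (\<Sum>i=0..k - j. (if i = d then 1 / fact d else 0) * sinhc_cosh_term j i (k - j)))) at_top"
    by (rule Lim_transform_eventually[rotated])
  also have "(\<Sum>j=0..k. sqrt_coeff j * 1 *
        (\<Sum>i=0..k - j. (if i = d then 1 / fact d else 0) * sinhc_cosh_term j i (k - j))) =
      (\<Sum>j=0..k. sqrt_coeff j * sinhc_cosh_term j d (k - j)) / fact d"
    by (simp add: sum_divide_distrib if_distrib[of "\<lambda>x. x * _"] sum.delta cong: if_cong)
      (intro sum.cong refl, simp add: sinhc_cosh_term_eq_0)
  also have "(\<Sum>j=0..k. sqrt_coeff j * sinhc_cosh_term j d (k - j)) = (1/2) ^ ((k + 1) div 2)"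
    unfolding d_def by (rule sum_sqrt_coeff_leading_term)
  finally show ?thesis
    by (simp add: d_def power_one_over field_simps)
qed

theorem lemma3:
  fixes k :: nat
  shows "(\<lambda>n. expect n (\<lambda>t. (real (S2 t) - real n / 4) ^ k))
     \<sim>[at_top] (\<lambda>n. fact k / (2 ^ ((k + 1) div 2) * fact (k div 2) * 4 ^ k)
                   * real n ^ (k div 2))"
proof (rule asymp_equivI'_const)
  show "((\<lambda>n. expect n (\<lambda>t. (real (S2 t) - real n / 4) ^ k) / real n ^ (k div 2))
      \<longlongrightarrow> fact k / (2 ^ ((k + 1) div 2) * fact (k div 2) * 4 ^ k)) at_top"
    by (rule expect_S2_central_power_tendsto)
qed simp

end
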